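(* Let $(a,b)$ be a real interval and let $W$ be a weight matrix of size $N$ on $(a,b)$ (in the sense of the context; finite moments are not required). Let $\{F_n\}_{n\ge0}$ be a sequence of matrix orthogonal functions of size $N$ on $(a,b)$ with respect to $W$. Assume that for all $x\in(a,b)$ and all $n\ge0$ $$xF_n(x)=A_nF_{n-1}(x)+B_nF_n(x)+C_nF_{n+1}(x),$$ where $A_n,B_n,C_n\in M_N(\mathbb C)$ are constant matrices, $A_0=0$ (so the term with $F_{-1}$ is absent) and every $C_n$ is nonsingular. Then: (i) for every $n\ge0$ there is a uniquely determined matrix polynomial $Q_n\in M_N(\mathbb C)[x]$ with $F_n(x)=Q_n(x)F_0(x)$ on $(a,b)$; moreover $\deg Q_n=n$ and the leading coefficient of $Q_n$ is nonsingular; (ii) $W'=F_0WF_0^*$ has all moments $\int_a^b x^kW'(x)\,dx$, $k\ge0$, finite; (iii) $\{Q_n\}_{n\ge0}$ is a sequence of matrix orthogonal polynomials with respect to $W'$, i.e. $\int_a^bQ_i(x)W'(x)Q_j(x)^*\,dx=0$ for $i\neq j$; (iv) $xQ_n=A_nQ_{n-1}+B_nQ_n+C_nQ_{n+1}$ for all $n\ge0$ (with $A_0=0$).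
   Context: For $M\in M_N(\mathbb C)$, $M^*$ denotes the conjugate transpose. A weight matrix of size $N$ on $(a,b)$ (here without requiring finite moments) is an integrable function $W$ on $(a,b)$ (supported in $[a,b]$) such that $W(x)$ is a self-adjoint positive semidefinite $N\times N$ matrix for every $x\in(a,b)$ and positive definite for almost every $x$. A sequence of matrix orthogonal functions with respect to $W$ is a sequence $\{F_n\}_{n\ge0}$ of $M_N(\mathbb C)$-valued functions on $(a,b)$ such that $\det F_0(x)\neq0$ for almost every $x\in(a,b)$, $F_i(x)W(x)F_j(x)^*$ is integrable on $[a,b]$ for all $i,j\ge0$, and $\int_a^bF_i(x)W(x)F_j(x)^*\,dx=0$ for all $i\neq j$. A sequence of matrix orthogonal polynomials with respect to a weight $W'$ is a sequence $\{Q_n\}$ of matrix polynomials with $\deg Q_n=n$, nonsingular leading coefficient, and $\int_a^b Q_iW'Q_j^*\,dx=0$ for $i\ne j$. *)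

theory Defs
  imports "HOL-Analysis.Analysis" "HOL-Computational_Algebra.Polynomial"
begin

text \<open>N x N complex matrices are represented as complex^'n^'n with 'n a finite type, CARD('n) = N.
  Matrix product is (**), nonsingular is invertible.\<close>

definition cadj :: "complex^'n^'m \<Rightarrow> complex^'m^'n" where
  "cadj M = (\<chi> i j. cnj (M $ j $ i))"

definition hermitian :: "complex^'n^'n \<Rightarrow> bool" where
  "hermitian M \<longleftrightarrow> cadj M = M"

definition qform :: "complex^'n^'n \<Rightarrow> complex^'n \<Rightarrow> complex" where
  "qform M v = (\<Sum>i\<in>UNIV. \<Sum>j\<in>UNIV. cnj (v $ i) * M $ i $ j * v $ j)"

definition psd_mat :: "complex^'n^'n \<Rightarrow> bool" where
  "psd_mat M \<longleftrightarrow> hermitian M \<and> (\<forall>v. 0 \<le> Re (qform M v))"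

definition pd_mat :: "complex^'n^'n \<Rightarrow> bool" where
  "pd_mat M \<longleftrightarrow> hermitian M \<and> (\<forall>v. v \<noteq> 0 \<longrightarrow> 0 < Re (qform M v))"

definition oint :: "ereal \<Rightarrow> ereal \<Rightarrow> real set" where
  "oint a b = {x. a < ereal x \<and> ereal x < b}"

definition weight_matrix :: "real set \<Rightarrow> (real \<Rightarrow> complex^'n^'n) \<Rightarrow> bool" where
  "weight_matrix I W \<longleftrightarrow> set_integrable lborel I W \<and> (\<forall>x\<in>I. psd_mat (W x))
     \<and> (AE x in lborel. x \<in> I \<longrightarrow> pd_mat (W x))"

definition matrix_orth_functions ::
  "real set \<Rightarrow> (real \<Rightarrow> complex^'n^'n) \<Rightarrow> (nat \<Rightarrow> real \<Rightarrow> complex^'n^'n) \<Rightarrow> bool" where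
  "matrix_orth_functions I W F \<longleftrightarrow>
     (AE x in lborel. x \<in> I \<longrightarrow> det (F 0 x) \<noteq> 0)
     \<and> (\<forall>i j. set_integrable lborel I (\<lambda>x. F i x ** W x ** cadj (F j x)))
     \<and> (\<forall>i j. i \<noteq> j \<longrightarrow> (LINT x:I|lborel. F i x ** W x ** cadj (F j x)) = 0)"

definition mpeval :: "(complex^'n^'n) poly \<Rightarrow> real \<Rightarrow> complex^'n^'n" where
  "mpeval P x = (\<Sum>k\<le>degree P. (x ^ k) *\<^sub>R coeff P k)"

definition matrix_orth_polys ::
  "real set \<Rightarrow> (real \<Rightarrow> complex^'n^'n) \<Rightarrow> (nat \<Rightarrow> (complex^'n^'n) poly) \<Rightarrow> bool" where
  "matrix_orth_polys I W' Q \<longleftrightarrow>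
     (\<forall>n. degree (Q n) = n \<and> invertible (lead_coeff (Q n)))
     \<and> (\<forall>i j. set_integrable lborel I (\<lambda>x. mpeval (Q i) x ** W' x ** cadj (mpeval (Q j) x)))
     \<and> (\<forall>i j. i \<noteq> j \<longrightarrow>
          (LINT x:I|lborel. mpeval (Q i) x ** W' x ** cadj (mpeval (Q j) x)) = 0)"

end

theory Submission
  imports Defs
begin

text \<open>Solving the recurrence for \<open>F (Suc n)\<close> (possible because \<open>C n\<close> is invertible) defines
  matrix polynomials \<open>Q n\<close> by the same recurrence, starting from \<open>Q 0 = 1\<close>; by induction
  \<open>F n = Q n F 0\<close>, \<open>Q n\<close> has degree \<open>n\<close> and leading coefficient \<open>C (n-1)\<^sup>-\<^sup>1 \<cdots> C 0\<^sup>-\<^sup>1\<close>.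
  Since \<open>F 0\<close> is invertible almost everywhere, hence at infinitely many points, \<open>Q n\<close> is
  unique. Orthogonality of the \<open>Q n\<close> with respect to \<open>F 0 W F 0\<^sup>*\<close> is orthogonality of the
  \<open>F n\<close>, and multiplying by \<open>x\<close> and applying the recurrence shows inductively that every
  \<open>x\<^sup>k F n W F 0\<^sup>*\<close> is integrable.\<close>

lemma matrix_add_rdistrib: "((X::'a::semiring_1^'n^'m) + Y) ** M = X ** M + Y ** M"
  by (simp add: matrix_matrix_mult_def vec_eq_iff sum.distrib algebra_simps)

lemma matrix_diff_rdistrib: "((X::'a::ring_1^'n^'m) - Y) ** M = X ** M - Y ** M"
  by (simp add: matrix_matrix_mult_def vec_eq_iff sum_subtractf algebra_simps)

lemma matrix_sum_ldistrib: "(M::'a::semiring_1^'n^'m) ** sum f S = (\<Sum>i\<in>S. M ** f i)"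
proof (cases "finite S")
  case True
  then show ?thesis by (induction S rule: finite_induct) (simp_all add: matrix_add_ldistrib)
qed simp

lemma matrix_scaleR_right: "(M::'a::real_algebra_1^'n^'m) ** (c *\<^sub>R X) = c *\<^sub>R (M ** X)"
  by (simp add: matrix_scalar_ac scalar_matrix_assoc)

lemma matrix_inv:
  assumes "invertible (A::'a::semiring_1^'n^'m)"
  shows matrix_inv_right: "A ** matrix_inv A = mat 1"
    and matrix_inv_left: "matrix_inv A ** A = mat 1"
  using someI_ex[OF assms[unfolded invertible_def]] unfolding matrix_inv_def by auto

lemma invertible_matrix_inv: "invertible (A::'a::semiring_1^'n^'m) \<Longrightarrow> invertible (matrix_inv A)"
  using matrix_inv unfolding invertible_def by blast

lemma invertible_nonzero: "invertible (A::'a::semiring_1^'n^'m) \<Longrightarrow> A \<noteq> 0"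
proof
  assume "invertible A" "A = 0"
  then have "(mat 1 :: 'a^'m^'m) = 0" using matrix_inv_right by fastforce
  then have "(mat 1 :: 'a^'m^'m) $ undefined $ undefined = 0" by simp
  then show False by (simp add: mat_def)
qed

lemma matrix_mult_cancel_left:
  "invertible (C::'a::semiring_1^'n^'n) \<Longrightarrow> C ** X = C ** Y \<Longrightarrow> X = Y"
  by (metis matrix_inv_left matrix_mul_assoc matrix_mul_lid)

lemma matrix_mult_cancel_right:
  "invertible (G::'a::semiring_1^'n^'n) \<Longrightarrow> X ** G = Y ** G \<Longrightarrow> X = Y"
  by (metis matrix_inv_right matrix_mul_assoc matrix_mul_rid)

lemma cadj_matrix_mult: "cadj ((X::complex^'n^'m) ** (Y::complex^'p^'n)) = cadj Y ** cadj X"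
  by (simp add: cadj_def matrix_matrix_mult_def vec_eq_iff mult.commute)

lemma bounded_linear_matrix_mult_left:
  "bounded_linear (\<lambda>X::complex^'p^'n. (K::complex^'n^'m) ** X)"
  unfolding linear_conv_bounded_linear[symmetric]
  by (rule linearI) (simp_all add: matrix_add_ldistrib matrix_scaleR_right)

lemma set_integrable_matrix_mult_left:
  assumes "set_integrable M I (f :: _ \<Rightarrow> complex^'p^'n)"
  shows "set_integrable M I (\<lambda>x. (K::complex^'n^'m) ** f x)"
  using integrable_bounded_linear[OF bounded_linear_matrix_mult_left assms[unfolded set_integrable_def]]
  unfolding set_integrable_def by (simp add: matrix_scaleR_right)

definition mat_smult :: "'a::semiring_1^'n^'n \<Rightarrow> ('a^'n^'n) poly \<Rightarrow> ('a^'n^'n) poly" where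
  "mat_smult M P = map_poly (\<lambda>c. M ** c) P"

lemma coeff_mat_smult [simp]: "coeff (mat_smult M P) k = M ** coeff P k"
  by (simp add: mat_smult_def coeff_map_poly)

lemma degree_mat_smult_le: "degree (mat_smult M P) \<le> degree P"
  by (rule degree_le) (simp add: coeff_eq_0)

lemma mpeval_eq_sum_le: "degree P \<le> m \<Longrightarrow> mpeval P x = (\<Sum>k\<le>m. (x ^ k) *\<^sub>R coeff P k)"
  unfolding mpeval_def by (rule sum.mono_neutral_left) (auto simp: coeff_eq_0)

lemma mpeval_diff: "mpeval (P - Q) x = mpeval P x - mpeval Q x"
proof -
  let ?m = "max (degree P) (degree Q)"
  show ?thesis
    using mpeval_eq_sum_le[of "P - Q" ?m x] mpeval_eq_sum_le[of P ?m x] mpeval_eq_sum_le[of Q ?m x]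
      degree_diff_le[of P ?m Q]
    by (simp add: scaleR_diff_right sum_subtractf)
qed

lemma mpeval_mat_smult: "mpeval (mat_smult M P) x = M ** mpeval P x"
  using mpeval_eq_sum_le[of "mat_smult M P" "degree P" x] degree_mat_smult_le[of M P]
  by (simp add: mpeval_def matrix_sum_ldistrib matrix_scaleR_right)

lemma mpeval_pCons_0: "mpeval (pCons 0 P) x = x *\<^sub>R mpeval P x"
proof -
  have "mpeval (pCons 0 P) x = (\<Sum>k\<le>Suc (degree P). (x ^ k) *\<^sub>R coeff (pCons 0 P) k)"
    by (rule mpeval_eq_sum_le) (simp add: degree_pCons_le)
  also have "\<dots> = (\<Sum>k\<le>degree P. (x ^ Suc k) *\<^sub>R coeff P k)"
    by (subst sum.atMost_Suc_shift) simp
  also have "\<dots> = x *\<^sub>R mpeval P x"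
    by (simp add: mpeval_def scaleR_sum_right)
  finally show ?thesis .
qed

lemma mpeval_const [simp]: "mpeval [:c:] x = c"
  by (simp add: mpeval_def)

lemma poly_of_real_map_poly_entry:
  "poly (map_poly (\<lambda>c. c $ i $ j) P) (complex_of_real x) = mpeval P x $ i $ j"
proof -
  let ?p = "map_poly (\<lambda>c. c $ i $ j) P"
  have "degree ?p \<le> degree P"
    by (rule degree_le) (simp add: coeff_map_poly coeff_eq_0)
  then have "poly ?p (complex_of_real x) = (\<Sum>k\<le>degree P. coeff ?p k * complex_of_real x ^ k)"
    unfolding poly_altdef by (intro sum.mono_neutral_left) (auto simp: coeff_eq_0)
  also have "\<dots> = mpeval P x $ i $ j"
    by (simp add: mpeval_def coeff_map_poly) (simp add: scaleR_conv_of_real mult.commute)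
  finally show ?thesis .
qed

lemma mpeval_eq_on_infinite_imp_eq:
  fixes P Q :: "(complex^'n^'n) poly"
  assumes "infinite S" and eq: "\<And>x. x \<in> S \<Longrightarrow> mpeval P x = mpeval Q x"
  shows "P = Q"
proof -
  have "coeff (P - Q) k $ i $ j = 0" for k i j
  proof -
    let ?p = "map_poly (\<lambda>c. c $ i $ j) (P - Q)"
    have "complex_of_real ` S \<subseteq> {z. poly ?p z = 0}"
      using eq by (auto simp: poly_of_real_map_poly_entry mpeval_diff)
    moreover have "infinite (complex_of_real ` S)"
      using \<open>infinite S\<close> by (auto dest: finite_imageD simp: inj_on_def)
    ultimately have "?p = 0"
      using poly_roots_finite finite_subset by blast
    then have "coeff ?p k = 0" by simp
    then show ?thesis by (simp add: coeff_map_poly)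
  qed
  then show ?thesis by (simp add: vec_eq_iff poly_eq_iff)
qed

fun recurrence_poly ::
  "(nat \<Rightarrow> complex^'n^'n) \<Rightarrow> (nat \<Rightarrow> complex^'n^'n) \<Rightarrow> (nat \<Rightarrow> complex^'n^'n) \<Rightarrow> nat
    \<Rightarrow> (complex^'n^'n) poly" where
  "recurrence_poly A B C 0 = [:mat 1:]"
| "recurrence_poly A B C (Suc n) = mat_smult (matrix_inv (C n))
      (pCons 0 (recurrence_poly A B C n) - mat_smult (A n) (recurrence_poly A B C (n - 1))
        - mat_smult (B n) (recurrence_poly A B C n))"

lemma degree_recurrence_poly:
  assumes "\<And>n. invertible (C n)"
  shows "degree (recurrence_poly A B C n) = n \<and> invertible (lead_coeff (recurrence_poly A B C n))"
proof (induction n rule: less_induct)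
  case (less n)
  show ?case
  proof (cases n)
    case 0
    have "invertible (mat 1 :: complex^'n^'n)"
      unfolding invertible_def by (intro exI[of _ "mat 1"]) simp
    then show ?thesis using 0 by simp
  next
    case (Suc m)
    let ?Q = "recurrence_poly A B C"
    have IH: "degree (?Q m) = m" "invertible (lead_coeff (?Q m))" "degree (?Q (m - 1)) \<le> m"
      using less.IH[of m] less.IH[of "m - 1"] Suc by auto
    have high: "coeff (?Q (Suc m)) k = 0" if "k > Suc m" for k
      using that IH by (cases k) (auto simp: coeff_eq_0)
    have top: "coeff (?Q (Suc m)) (Suc m) = matrix_inv (C m) ** lead_coeff (?Q m)"
      using IH by (simp add: coeff_eq_0)
    have inv: "invertible (matrix_inv (C m) ** lead_coeff (?Q m))"
      by (rule invertible_mult[OF invertible_matrix_inv[OF assms] IH(2)])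
    have "degree (?Q (Suc m)) = Suc m"
      by (rule antisym[OF degree_le le_degree]) (use high top invertible_nonzero[OF inv] in auto)
    then show ?thesis using top inv Suc by simp
  qed
qed

lemma mpeval_recurrence_poly_three_term:
  assumes "invertible (C n)"
  shows "x *\<^sub>R mpeval (recurrence_poly A B C n) x
    = A n ** mpeval (recurrence_poly A B C (n - 1)) x + B n ** mpeval (recurrence_poly A B C n) x
      + C n ** mpeval (recurrence_poly A B C (Suc n)) x"
proof -
  have "C n ** mpeval (recurrence_poly A B C (Suc n)) x
    = x *\<^sub>R mpeval (recurrence_poly A B C n) x - A n ** mpeval (recurrence_poly A B C (n - 1)) x
      - B n ** mpeval (recurrence_poly A B C n) x"
    by (simp add: mpeval_mat_smult mpeval_diff mpeval_pCons_0 matrix_mul_assoc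
        matrix_inv_right[OF assms])
  then show ?thesis by (simp add: algebra_simps)
qed

lemma three_term_factorization:
  assumes rec: "\<And>n x. x \<in> I \<Longrightarrow>
      x *\<^sub>R F n x = A n ** F (n - 1) x + B n ** F n x + C n ** F (Suc n) x"
    and Cinv: "\<And>n. invertible (C n)"
    and "x \<in> I"
  shows "F n x = mpeval (recurrence_poly A B C n) x ** F 0 x"
proof (induction n rule: less_induct)
  case (less n)
  show ?case
  proof (cases n)
    case (Suc m)
    let ?Q = "\<lambda>k. mpeval (recurrence_poly A B C k) x"
    have IH: "F m x = ?Q m ** F 0 x" "F (m - 1) x = ?Q (m - 1) ** F 0 x"
      using less.IH[of m] less.IH[of "m - 1"] Suc by auto
    have "C m ** F (Suc m) x = x *\<^sub>R F m x - A m ** F (m - 1) x - B m ** F m x"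
      using rec[OF \<open>x \<in> I\<close>, of m] by (simp add: algebra_simps)
    also have "\<dots> = (x *\<^sub>R ?Q m - A m ** ?Q (m - 1) - B m ** ?Q m) ** F 0 x"
      unfolding IH by (simp add: matrix_diff_rdistrib scalar_matrix_assoc matrix_mul_assoc)
    also have "\<dots> = C m ** (?Q (Suc m) ** F 0 x)"
      using mpeval_recurrence_poly_three_term[where x=x and A=A and B=B and C=C and n=m, OF Cinv]
      by (simp add: algebra_simps matrix_mul_assoc)
    finally show ?thesis
      using matrix_mult_cancel_left[OF Cinv] Suc by blast
  qed simp
qed

lemma mpeval_eq_imp_eq_if_right_factor:
  fixes P Q :: "(complex^'n^'n) poly" and G :: "real \<Rightarrow> complex^'n^'n"
  assumes "infinite {x \<in> I. invertible (G x)}"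
    and "\<And>x. x \<in> I \<Longrightarrow> mpeval P x ** G x = mpeval Q x ** G x"
  shows "P = Q"
  using assms(1)
proof (rule mpeval_eq_on_infinite_imp_eq)
  fix x assume "x \<in> {x \<in> I. invertible (G x)}"
  then show "mpeval P x = mpeval Q x"
    using assms(2) by (auto intro: matrix_mult_cancel_right)
qed

lemma infinite_oint_AE:
  assumes "a < b" and AE: "AE x in lborel. x \<in> oint a b \<longrightarrow> P x"
  shows "infinite {x \<in> oint a b. P x}"
proof
  assume fin: "finite {x \<in> oint a b. P x}"
  obtain c where c: "a < ereal c" "ereal c < b"
    using ereal_dense2[OF \<open>a < b\<close>] by blast
  obtain d where d: "ereal c < ereal d" "ereal d < b"
    using ereal_dense2[OF c(2)] by blast
  have sub: "{c<..<d} \<subseteq> oint a b"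
    unfolding oint_def by (auto intro: less_trans[OF c(1)] less_trans[OF _ d(2)])
  have "AE x in lborel. x \<notin> {x \<in> oint a b. P x}"
    by (rule AE_not_in[OF finite_imp_null_set_lborel[OF fin]])
  with AE have "AE x in lborel. x \<notin> {c<..<d}"
    by eventually_elim (use sub in auto)
  then have "emeasure lborel {c<..<d} = 0"
    by (subst (asm) AE_iff_measurable[of "{c<..<d}"]) auto
  then show False using d(1) by simp
qed

lemma three_term_moments:
  assumes rec: "\<And>n x. x \<in> I \<Longrightarrow>
      x *\<^sub>R F n x = A n ** F (n - 1) x + B n ** F n x + C n ** F (Suc n) x"
    and int: "\<And>i. set_integrable lborel I (\<lambda>x. F i x ** W x ** cadj (G x))"
  shows "set_integrable lborel I (\<lambda>x. (x ^ k) *\<^sub>R (F n x ** W x ** cadj (G x)))"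
proof (induction k arbitrary: n)
  case 0
  then show ?case using int by simp
next
  case (Suc k)
  let ?M = "\<lambda>i x. (x ^ k) *\<^sub>R (F i x ** W x ** cadj (G x))"
  have "set_integrable lborel I (\<lambda>x. A n ** ?M (n - 1) x + B n ** ?M n x + C n ** ?M (Suc n) x)"
    by (intro set_integral_add set_integrable_matrix_mult_left Suc.IH)
  moreover have "x ^ Suc k *\<^sub>R (F n x ** W x ** cadj (G x))
      = A n ** ?M (n - 1) x + B n ** ?M n x + C n ** ?M (Suc n) x" if "x \<in> I" for x
  proof -
    have "x ^ Suc k *\<^sub>R (F n x ** W x ** cadj (G x))
        = (x ^ k) *\<^sub>R ((x *\<^sub>R F n x) ** W x ** cadj (G x))"
      by (simp add: scalar_matrix_assoc mult.commute)
    also have "\<dots> = A n ** ?M (n - 1) x + B n ** ?M n x + C n ** ?M (Suc n) x"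
      by (simp add: rec[OF that] matrix_add_rdistrib matrix_scaleR_right matrix_mul_assoc
          scaleR_add_right)
    finally show ?thesis .
  qed
  ultimately show ?case
    by (subst set_integrable_cong[OF refl refl]) auto
qed

lemma matrix_orth_polys_if_factorization:
  assumes F: "matrix_orth_functions I W F"
    and factor: "\<And>n x. x \<in> I \<Longrightarrow> F n x = mpeval (Q n) x ** F 0 x"
    and deg: "\<And>n. degree (Q n) = n \<and> invertible (lead_coeff (Q n))"
  shows "matrix_orth_polys I (\<lambda>x. F 0 x ** W x ** cadj (F 0 x)) Q"
proof -
  have eq: "mpeval (Q i) x ** (F 0 x ** W x ** cadj (F 0 x)) ** cadj (mpeval (Q j) x)
      = F i x ** W x ** cadj (F j x)" if "x \<in> I" for x i j
    using factor[OF that, of i] factor[OF that, of j] by (simp add: cadj_matrix_mult matrix_mul_assoc)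
  have "(LINT x:I|lborel. mpeval (Q i) x ** (F 0 x ** W x ** cadj (F 0 x)) ** cadj (mpeval (Q j) x))
      = (LINT x:I|lborel. F i x ** W x ** cadj (F j x))" for i j
    unfolding set_lebesgue_integral_def by (intro Bochner_Integration.integral_cong) (auto simp: eq indicator_def)
  moreover have "set_integrable lborel I
      (\<lambda>x. mpeval (Q i) x ** (F 0 x ** W x ** cadj (F 0 x)) ** cadj (mpeval (Q j) x))" for i j
    using F unfolding matrix_orth_functions_def
    by (subst set_integrable_cong[OF refl refl]) (auto simp: eq)
  ultimately show ?thesis
    using F deg[THEN conjunct1] deg[THEN conjunct2]
    unfolding matrix_orth_functions_def matrix_orth_polys_def by auto
qed

theorem theorem2p1:
  fixes a b :: ereal
    and W :: "real \<Rightarrow> complex^'n^'n"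
    and F :: "nat \<Rightarrow> real \<Rightarrow> complex^'n^'n"
    and A B C :: "nat \<Rightarrow> complex^'n^'n"
  assumes ab: "a < b"
    and W: "weight_matrix (oint a b) W"
    and F: "matrix_orth_functions (oint a b) W F"
    and rec: "\<And>n x. x \<in> oint a b \<Longrightarrow>
        x *\<^sub>R F n x = A n ** F (n - 1) x + B n ** F n x + C n ** F (Suc n) x"
    and A0: "A 0 = 0"
    and Cinv: "\<And>n. invertible (C n)"
  shows "\<exists>Q :: nat \<Rightarrow> (complex^'n^'n) poly.
     (\<forall>n. (\<forall>x\<in>oint a b. F n x = mpeval (Q n) x ** F 0 x)
          \<and> (\<forall>P. (\<forall>x\<in>oint a b. F n x = mpeval P x ** F 0 x) \<longrightarrow> P = Q n)
          \<and> degree (Q n) = n \<and> invertible (lead_coeff (Q n)))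
   \<and> (\<forall>k::nat. set_integrable lborel (oint a b) (\<lambda>x. (x ^ k) *\<^sub>R (F 0 x ** W x ** cadj (F 0 x))))
   \<and> matrix_orth_polys (oint a b) (\<lambda>x. F 0 x ** W x ** cadj (F 0 x)) Q
   \<and> (\<forall>n (x::real). x *\<^sub>R mpeval (Q n) x
        = A n ** mpeval (Q (n - 1)) x + B n ** mpeval (Q n) x + C n ** mpeval (Q (Suc n)) x)"
proof -
  define Q where "Q = recurrence_poly A B C"
  have factor: "\<forall>x\<in>oint a b. F n x = mpeval (Q n) x ** F 0 x" for n
    unfolding Q_def using three_term_factorization[OF rec Cinv] by blast
  have deg: "degree (Q n) = n \<and> invertible (lead_coeff (Q n))" for n
    unfolding Q_def by (rule degree_recurrence_poly[OF Cinv])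
  have "infinite {x \<in> oint a b. invertible (F 0 x)}"
    using infinite_oint_AE[OF ab] F by (simp add: matrix_orth_functions_def invertible_det_nz)
  then have unique: "P = Q n" if P: "\<forall>x\<in>oint a b. F n x = mpeval P x ** F 0 x" for P n
  proof (rule mpeval_eq_imp_eq_if_right_factor)
    fix x assume "x \<in> oint a b"
    then show "mpeval P x ** F 0 x = mpeval (Q n) x ** F 0 x"
      using P factor[of n] by (metis (no_types))
  qed
  have "set_integrable lborel (oint a b) (\<lambda>x. (x ^ k) *\<^sub>R (F 0 x ** W x ** cadj (F 0 x)))" for k
    using F unfolding matrix_orth_functions_def by (intro three_term_moments[OF rec]) auto
  moreover have "matrix_orth_polys (oint a b) (\<lambda>x. F 0 x ** W x ** cadj (F 0 x)) Q"
    using factor deg by (intro matrix_orth_polys_if_factorization[OF F]) blast+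
  moreover have "x *\<^sub>R mpeval (Q n) x
      = A n ** mpeval (Q (n - 1)) x + B n ** mpeval (Q n) x + C n ** mpeval (Q (Suc n)) x" for n x
    unfolding Q_def by (rule mpeval_recurrence_poly_three_term[OF Cinv])
  ultimately show ?thesis
    using factor unique deg by blast
qed

end
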